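(* Let $\mathcal A\subset\mathbb R^n$ be compact with diameter $D_{\mathcal A}<\infty$ and let $\mathcal X=\mathrm{conv}(\mathcal A)$ be $\alpha$-strongly convex for some $\alpha>0$. Let $f$ be convex and differentiable with $L$-Lipschitz gradient. Let $\{x_t\}_{t\ge0}$ be generated by the AC-FW algorithm with the closed-loop Frank-Wolfe subroutine and a damping sequence satisfying Condition (D), let $\eta\in(1,2)$, and let $\{h_t\}_{t\ge0}$ denote the elements of $\mathcal G\cap\mathcal I_\eta$ in increasing order. (i) If in addition $f$ is $\mu$-strongly convex for some $\mu>0$, then for any $t\ge0$, $$f(x_{h_t})-f(x^\star)\le\frac{\max\left\{\frac{LD_{\mathcal A}^2}{2},\ 18\left(\frac{1}{1+\sqrt{\eta/2}}\right)^2\left(\frac{\alpha\sqrt\mu}{8\sqrt2 L}\right)^{-2}\right\}\left(\frac{1}{1-\sqrt{\eta/2}}\right)^2}{\left(t+\frac{1}{1-\sqrt{\eta/2}}\right)^2}.$$ (ii) If in addition there is $g>0$ with $\|\nabla f(x)\|_2\ge g$ for all $x\in\mathcal X$, then for any $t\ge0$, $$f(x_{h_t})-f(x^\star)\le\frac{LD_{\mathcal A}^2}{2}\left(\max\left\{\frac{\eta}{2},\ 1-\left(1-\frac{\eta}{2}\right)\frac{\alpha g}{8L}\right\}\right)^t.$$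
   Context: $D_{\mathcal A}:=\sup_{x,y\in\mathcal A}\|x-y\|_2$; $\|\nabla f(x)-\nabla f(y)\|_2\le L\|x-y\|_2$ for all $x,y\in\mathbb R^n$. $x^\star$ is an optimal solution of $\min_{x\in\mathcal X}f(x)$. $\mathcal X$ is $\alpha$-strongly convex if for all $\rho\in[0,1]$, $x,y\in\mathcal X$ and $z\in\mathbb R^n$ with $\|z\|_2\le1$: $\rho x+(1-\rho)y+\frac{\rho(1-\rho)\alpha\|x-y\|_2^2}{2}z\in\mathcal X$. $f$ is $\mu$-strongly convex if $f(y)\ge f(x)+\nabla f(x)^\top(y-x)+\frac\mu2\|y-x\|_2^2$ for all $x,y$. For $x\ne y$, $\ell(x,y):=2|f(y)-f(x)-\nabla f(x)^\top(y-x)|/\|y-x\|_2^2$, $\ell(x,x):=0$. AC-FW algorithm with closed-loop Frank-Wolfe subroutine: given $\{r_t\}_{t\ge0}$, pick $x_{-1}\in\mathcal A$, $x_0\in\arg\min_{v\in\mathcal A}\nabla f(x_{-1})^\top v$, $L_0:=\ell(x_{-1},x_0)$. For $t=0,1,\dots$: $v_t\in\arg\min_{v\in\mathcal A}\nabla f(x_t)^\top v$; $d_t:=x_t-v_t$, $\gamma_t^{\max}:=1$; $\gamma_t:=\min\{\nabla f(x_t)^\top d_t/(L_t\|d_t\|_2^2),\gamma_t^{\max}\}$; $\bar x_{t+1}:=x_t-\gamma_td_t$; $L_{t+1}:=\max\{\ell(x_t,\bar x_{t+1}),r_tL_t\}$; $x_{t+1}:=\bar x_{t+1}$ if $f(\bar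 x_{t+1})<f(x_t)$, else $x_{t+1}:=x_t$. $\mathcal I_\eta:=\{t\ge0:L_{t+1}\le\eta L_t\}$; $\mathcal G:=\{t\ge0:\gamma_t^{\max}\ge1\text{ or }\gamma_t<\gamma_t^{\max}\}$ (here $\mathcal G=\mathbb Z_+$, so $\mathcal G\cap\mathcal I_\eta=\mathcal I_\eta$). Condition (D): $r_t\in(0,1]$ for all $t$ and $\prod_{t\ge0}r_t\in(0,1]$. *)

theory Defs
  imports "HOL-Analysis.Analysis"
begin

definition strongly_convex_set :: "real \<Rightarrow> 'a::euclidean_space set \<Rightarrow> bool" where
  "strongly_convex_set \<alpha> X \<longleftrightarrow>
     (\<forall>\<rho>\<in>{0..1}. \<forall>x\<in>X. \<forall>y\<in>X. \<forall>z. norm z \<le> 1 \<longrightarrow>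
        \<rho> *\<^sub>R x + (1 - \<rho>) *\<^sub>R y + (\<rho> * (1 - \<rho>) * \<alpha> * (norm (x - y))\<^sup>2 / 2) *\<^sub>R z \<in> X)"

definition strongly_convex_fun ::
    "real \<Rightarrow> ('a::euclidean_space \<Rightarrow> real) \<Rightarrow> ('a \<Rightarrow> 'a) \<Rightarrow> bool" where
  "strongly_convex_fun \<mu> f grad \<longleftrightarrow>
     (\<forall>x y. f y \<ge> f x + grad x \<bullet> (y - x) + \<mu> / 2 * (norm (y - x))\<^sup>2)"

definition ell :: "('a::euclidean_space \<Rightarrow> real) \<Rightarrow> ('a \<Rightarrow> 'a) \<Rightarrow> 'a \<Rightarrow> 'a \<Rightarrow> real" where
  "ell f grad x y = (if x = y then 0
      else 2 * \<bar>f y - f x - grad x \<bullet> (y - x)\<bar> / (norm (y - x))\<^sup>2)"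

end

theory Submission
  imports Defs
begin

text \<open>
  Along a segment the local estimate \<open>ell\<close> never exceeds \<open>L\<close>, so the estimates
  \<open>L\<^sub>t\<close> stay in \<open>(0, L]\<close>, the iterates stay in \<open>conv A\<close> and \<open>f(x\<^sub>t)\<close>
  never increases. At an iteration with \<open>L\<^sub>t\<^sub>+\<^sub>1 \<le> \<eta> L\<^sub>t\<close>, the quadratic
  upper bound with constant \<open>\<eta> L\<^sub>t\<close>, together with strong convexity of \<open>conv A\<close>
  (which gives \<open>\<nabla>f(x)\<cdot>(x - v) \<ge> \<alpha>/4 \<parallel>x - v\<parallel>\<^sup>2 \<parallel>\<nabla>f(x)\<parallel>\<close>), shows that the
  gap \<open>h\<close> either contracts by \<open>\<eta>/2\<close> or drops by
  \<open>(1 - \<eta>/2) \<alpha> \<parallel>\<nabla>f(x)\<parallel> h / (4L)\<close>. A lower bound on the gradient makes this a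
  linear contraction; under \<open>\<mu>\<close>-strong convexity \<open>\<parallel>\<nabla>f(x)\<parallel> \<ge> \<surd>(2\<mu>h)\<close>, so the
  drop is of order \<open>h\<^sup>3\<^sup>/\<^sup>2\<close>, which yields the \<open>O(1/t\<^sup>2)\<close> rate. Only the
  iterations in \<open>\<I>\<^sub>\<eta>\<close> are counted; the others merely do not increase the gap.
\<close>

lemma has_real_derivative_along_line:
  fixes f :: "'a::real_inner \<Rightarrow> real"
  assumes "\<And>y. (f has_derivative (\<lambda>h. grad y \<bullet> h)) (at y)"
  shows "((\<lambda>t. f (x + t *\<^sub>R d)) has_real_derivative (grad (x + t *\<^sub>R d) \<bullet> d)) (at t)"
proof -
  have "((\<lambda>t. x + t *\<^sub>R d) has_derivative (\<lambda>s. s *\<^sub>R d)) (at t)"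
    by (auto intro!: derivative_eq_intros)
  from has_derivative_compose[OF this assms]
  have "((\<lambda>t. f (x + t *\<^sub>R d)) has_derivative (\<lambda>s. grad (x + t *\<^sub>R d) \<bullet> (s *\<^sub>R d))) (at t)"
    by (simp add: o_def)
  moreover have "(\<lambda>s. grad (x + t *\<^sub>R d) \<bullet> (s *\<^sub>R d)) = (*) (grad (x + t *\<^sub>R d) \<bullet> d)"
    by (auto simp: fun_eq_iff)
  ultimately show ?thesis
    by (simp add: has_field_derivative_def)
qed

lemma convex_on_gradient_tangent_le:
  fixes f :: "'a::real_inner \<Rightarrow> real"
  assumes convex: "convex_on UNIV f"
    and deriv: "\<And>y. (f has_derivative (\<lambda>h. grad y \<bullet> h)) (at y)"
  shows "f x + grad x \<bullet> (y - x) \<le> f y"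
proof -
  define \<phi> where "\<phi> t = f (x + t *\<^sub>R (y - x))" for t :: real
  have "convex_on UNIV \<phi>"
  proof (rule convex_onI)
    fix t a b :: real
    assume "0 < t" "t < 1"
    have "\<phi> ((1 - t) *\<^sub>R a + t *\<^sub>R b)
        = f ((1 - t) *\<^sub>R (x + a *\<^sub>R (y - x)) + t *\<^sub>R (x + b *\<^sub>R (y - x)))"
      unfolding \<phi>_def by (simp add: algebra_simps)
    also have "\<dots> \<le> (1 - t) * \<phi> a + t * \<phi> b"
      unfolding \<phi>_def using convex_onD[OF convex] \<open>0 < t\<close> \<open>t < 1\<close> by simp
    finally show "\<phi> ((1 - t) *\<^sub>R a + t *\<^sub>R b) \<le> (1 - t) * \<phi> a + t * \<phi> b" .
  qed simp
  moreover have "(\<phi> has_field_derivative (grad x \<bullet> (y - x))) (at 0 within UNIV)"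
    unfolding \<phi>_def using has_real_derivative_along_line[OF deriv, of x "y - x" 0] by simp
  ultimately have "\<phi> 1 - \<phi> 0 \<ge> (grad x \<bullet> (y - x)) * (1 - 0)"
    by (intro convex_on_imp_above_tangent) auto
  then show ?thesis
    unfolding \<phi>_def by simp
qed

lemma lipschitz_gradient_quadratic_upper_bound:
  fixes f :: "'a::real_inner \<Rightarrow> real"
  assumes deriv: "\<And>y. (f has_derivative (\<lambda>h. grad y \<bullet> h)) (at y)"
    and lipschitz: "\<And>y z. norm (grad y - grad z) \<le> L * norm (y - z)"
  shows "f y - f x - grad x \<bullet> (y - x) \<le> L / 2 * (norm (y - x))\<^sup>2"
proof -
  define d where "d = y - x"
  define \<psi> where "\<psi> t = f (x + t *\<^sub>R d) - t * (grad x \<bullet> d) - L * t\<^sup>2 * (norm d)\<^sup>2 / 2" for t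
  have "\<psi> 1 \<le> \<psi> 0"
  proof (rule DERIV_nonpos_imp_nonincreasing[of 0 1 \<psi>])
    fix t :: real
    assume t: "0 \<le> t" "t \<le> 1"
    have deriv_\<psi>: "(\<psi> has_real_derivative
            (grad (x + t *\<^sub>R d) - grad x) \<bullet> d - L * t * (norm d)\<^sup>2) (at t)"
      unfolding \<psi>_def inner_diff_left
      by (rule derivative_eq_intros has_real_derivative_along_line[OF deriv] | simp)+
    have "(grad (x + t *\<^sub>R d) - grad x) \<bullet> d \<le> norm (grad (x + t *\<^sub>R d) - grad x) * norm d"
      by (rule norm_cauchy_schwarz)
    also have "\<dots> \<le> L * norm (t *\<^sub>R d) * norm d"
      using lipschitz[of "x + t *\<^sub>R d" x] by (intro mult_right_mono) auto
    also have "\<dots> = L * t * (norm d)\<^sup>2"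
      using t by (simp add: power2_eq_square)
    finally show "\<exists>D. (\<psi> has_real_derivative D) (at t) \<and> D \<le> 0"
      using deriv_\<psi> by (intro exI conjI) auto
  qed simp
  then show ?thesis
    unfolding \<psi>_def d_def by simp
qed

lemma lipschitz_constant_nonneg:
  fixes F :: "'a::euclidean_space \<Rightarrow> 'b::real_normed_vector"
  assumes "\<And>y z. norm (F y - F z) \<le> L * norm (y - z)"
  shows "0 \<le> L"
proof -
  obtain b :: 'a where "b \<in> Basis"
    using nonempty_Basis by blast
  then have "0 \<le> L * norm (b - 0)"
    using assms[of b 0] norm_ge_zero order_trans by blast
  then show ?thesis
    using \<open>b \<in> Basis\<close> by (simp add: zero_le_mult_iff)
qed

lemma taylor_remainder_le_ell:
  fixes f :: "'a::euclidean_space \<Rightarrow> real"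
  shows "f b - f a - grad a \<bullet> (b - a) \<le> ell f grad a b / 2 * (norm (b - a))\<^sup>2"
  by (cases "a = b") (simp_all add: ell_def)

lemma ell_le_lipschitz:
  fixes f :: "'a::euclidean_space \<Rightarrow> real"
  assumes convex: "convex_on UNIV f"
    and deriv: "\<And>y. (f has_derivative (\<lambda>h. grad y \<bullet> h)) (at y)"
    and lipschitz: "\<And>y z. norm (grad y - grad z) \<le> L * norm (y - z)"
  shows "ell f grad a b \<le> L"
proof (cases "a = b")
  case True
  then show ?thesis
    using lipschitz_constant_nonneg[OF lipschitz] by (simp add: ell_def)
next
  case False
  then have "(norm (b - a))\<^sup>2 > 0"
    by simp
  moreover have "0 \<le> f b - f a - grad a \<bullet> (b - a)"
    using convex_on_gradient_tangent_le[OF convex deriv, of a b] by simp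
  moreover have "f b - f a - grad a \<bullet> (b - a) \<le> L / 2 * (norm (b - a))\<^sup>2"
    by (rule lipschitz_gradient_quadratic_upper_bound[OF deriv lipschitz])
  ultimately show ?thesis
    using False by (simp add: ell_def divide_le_eq)
qed

lemma inner_le_on_convex_hull:
  fixes g v :: "'a::real_inner"
  assumes "\<And>u. u \<in> A \<Longrightarrow> g \<bullet> v \<le> g \<bullet> u" and "u \<in> convex hull A"
  shows "g \<bullet> v \<le> g \<bullet> u"
proof -
  have "convex hull A \<subseteq> {u. g \<bullet> v \<le> g \<bullet> u}"
    using assms(1) convex_halfspace_ge by (intro hull_minimal) auto
  then show ?thesis
    using assms(2) by auto
qed

lemma norm_diff_le_diameter_convex_hull:
  fixes v :: "'a::real_normed_vector"
  assumes "bounded A" "v \<in> A" "u \<in> convex hull A"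
  shows "norm (u - v) \<le> diameter A"
proof -
  have "A \<subseteq> cball v (diameter A)"
    using diameter_bounded_bound[OF assms(1,2)] by (auto simp: dist_commute)
  then have "convex hull A \<subseteq> cball v (diameter A)"
    by (intro hull_minimal) simp_all
  then show ?thesis
    using assms(3) by (auto simp: dist_norm norm_minus_commute)
qed

lemma strongly_convex_set_inner_gap:
  fixes g x v :: "'a::euclidean_space"
  assumes sc: "strongly_convex_set \<alpha> C" and "x \<in> C" "v \<in> C"
    and v_min: "\<And>u. u \<in> C \<Longrightarrow> g \<bullet> v \<le> g \<bullet> u"
  shows "\<alpha> / 4 * (norm (x - v))\<^sup>2 * norm g \<le> g \<bullet> (x - v)"
proof (cases "g = 0")
  case True
  then show ?thesis by simp
next
  case False
  define z where "z = - (1 / norm g) *\<^sub>R g"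
  define p where "p = (1/2::real) *\<^sub>R x + (1 - 1/2) *\<^sub>R v
                      + ((1/2) * (1 - 1/2) * \<alpha> * (norm (x - v))\<^sup>2 / 2) *\<^sub>R z"
  have "norm z \<le> 1"
    using False by (simp add: z_def)
  then have "p \<in> C"
    unfolding p_def using \<open>x \<in> C\<close> \<open>v \<in> C\<close>
    by (intro sc[unfolded strongly_convex_set_def, rule_format]) auto
  then have "g \<bullet> v \<le> g \<bullet> p"
    by (rule v_min)
  also have "g \<bullet> p = (g \<bullet> x) / 2 + (g \<bullet> v) / 2 - \<alpha> / 8 * (norm (x - v))\<^sup>2 * norm g"
    using False
    by (simp add: p_def z_def inner_add_right algebra_simps dot_square_norm power2_eq_square)
  finally show ?thesis
    by (simp add: inner_diff_right algebra_simps)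
qed

lemma strongly_convex_fun_gap_le_norm_grad:
  fixes f :: "'a::euclidean_space \<Rightarrow> real"
  assumes sc: "strongly_convex_fun \<mu> f grad" and "0 < \<mu>"
  shows "f x - f y \<le> (norm (grad x))\<^sup>2 / (2 * \<mu>)"
proof -
  define \<rho> where "\<rho> = norm (y - x)"
  have "f y \<ge> f x + grad x \<bullet> (y - x) + \<mu> / 2 * \<rho>\<^sup>2"
    using sc unfolding strongly_convex_fun_def \<rho>_def by blast
  moreover have "- (grad x \<bullet> (y - x)) \<le> norm (grad x) * \<rho>"
    unfolding \<rho>_def by (metis inner_minus_right norm_cauchy_schwarz norm_minus_cancel)
  ultimately have "f x - f y \<le> norm (grad x) * \<rho> - \<mu> / 2 * \<rho>\<^sup>2"
    by simp
  also have "\<dots> \<le> (norm (grad x))\<^sup>2 / (2 * \<mu>)"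
  proof -
    have "0 \<le> (norm (grad x) - \<mu> * \<rho>)\<^sup>2"
      by simp
    then show ?thesis
      using \<open>0 < \<mu>\<close> by (simp add: field_simps power2_eq_square)
  qed
  finally show ?thesis .
qed

lemma frank_wolfe_step_decrease:
  fixes g d :: "'a::real_inner"
  assumes h: "0 \<le> h" "h \<le> g \<bullet> d"
    and gap: "\<alpha> / 4 * (norm d)\<^sup>2 * norm g \<le> g \<bullet> d"
    and l: "0 < l" "l \<le> L" and "0 < \<alpha>" and \<eta>: "0 \<le> \<eta>" "\<eta> \<le> 2"
    and \<gamma>: "\<gamma> = min ((g \<bullet> d) / (l * (norm d)\<^sup>2)) 1"
  shows "(1 - \<eta> / 2) * h \<le> \<gamma> * (g \<bullet> d) - \<eta> * l / 2 * \<gamma>\<^sup>2 * (norm d)\<^sup>2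
       \<or> (1 - \<eta> / 2) * (\<alpha> * norm g / (4 * L) * h)
           \<le> \<gamma> * (g \<bullet> d) - \<eta> * l / 2 * \<gamma>\<^sup>2 * (norm d)\<^sup>2"
proof (cases "d = 0")
  case True
  then show ?thesis
    using h by (simp add: \<gamma>)
next
  case False
  define G where "G = g \<bullet> d"
  define D where "D = (norm d)\<^sup>2"
  have "0 < D"
    using False by (simp add: D_def)
  show ?thesis
  proof (cases "1 \<le> G / (l * D)")
    case True
    then have "\<gamma> = 1" "l * D \<le> G"
      using l \<open>0 < D\<close> by (auto simp: \<gamma> G_def D_def field_simps)
    moreover have "\<eta> * (l * D) \<le> \<eta> * G"
      using \<open>l * D \<le> G\<close> \<eta> by (simp add: mult_left_mono)
    ultimately have "(1 - \<eta> / 2) * G \<le> \<gamma> * G - \<eta> * l / 2 * \<gamma>\<^sup>2 * D"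
      by (simp add: algebra_simps)
    moreover have "(1 - \<eta> / 2) * h \<le> (1 - \<eta> / 2) * G"
      using h \<eta> by (intro mult_left_mono) (auto simp: G_def)
    ultimately show ?thesis
      unfolding G_def D_def by linarith
  next
    case False
    then have decrease: "\<gamma> * G - \<eta> * l / 2 * \<gamma>\<^sup>2 * D = (1 - \<eta> / 2) * (G * G / (l * D))"
      using l \<open>0 < D\<close> by (simp add: \<gamma> G_def D_def field_simps power2_eq_square)
    have "\<alpha> * norm g / (4 * L) * h \<le> \<alpha> * norm g / (4 * l) * h"
      using l \<open>0 < \<alpha>\<close> h by (intro mult_right_mono divide_left_mono) auto
    also have "\<dots> \<le> \<alpha> * norm g / (4 * l) * G"
      using h l \<open>0 < \<alpha>\<close> by (intro mult_left_mono) (auto simp: G_def)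
    also have "\<dots> = (\<alpha> / 4 * D * norm g) * G / (l * D)"
      using \<open>0 < D\<close> by (simp add: field_simps)
    also have "\<dots> \<le> G * G / (l * D)"
      using gap h l \<open>0 < D\<close>
      by (intro divide_right_mono mult_right_mono) (auto simp: G_def D_def)
    finally have "(1 - \<eta> / 2) * (\<alpha> * norm g / (4 * L) * h) \<le> (1 - \<eta> / 2) * (G * G / (l * D))"
      using \<eta> by (intro mult_left_mono) auto
    then show ?thesis
      using decrease unfolding G_def D_def by (intro disjI2) linarith
  qed
qed

lemma inverse_square_bound_step_contraction:
  fixes B s u h h' :: real
  assumes "0 \<le> B" "0 < u" "0 \<le> s" "s * (u + 1) \<le> u"
    and "h \<le> B / u\<^sup>2" "h' \<le> s\<^sup>2 * h"
  shows "h' \<le> B / (u + 1)\<^sup>2"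
proof -
  have "(s * (u + 1))\<^sup>2 \<le> u\<^sup>2"
    using assms by (intro power_mono) auto
  then have "s\<^sup>2 * (u + 1)\<^sup>2 \<le> u\<^sup>2"
    by (simp only: power_mult_distrib)
  then have "s\<^sup>2 / u\<^sup>2 \<le> 1 / (u + 1)\<^sup>2"
    using \<open>0 < u\<close> by (simp add: field_simps power_mult_distrib)
  from mult_left_mono[OF this \<open>0 \<le> B\<close>]
  have "s\<^sup>2 * (B / u\<^sup>2) \<le> B / (u + 1)\<^sup>2"
    by (simp add: algebra_simps)
  moreover have "s\<^sup>2 * h \<le> s\<^sup>2 * (B / u\<^sup>2)"
    using assms by (intro mult_left_mono) auto
  ultimately show ?thesis
    using assms by linarith
qed

lemma inverse_square_bound_step_sqrt_decrease:
  fixes B K u h h' :: real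
  assumes "0 < B" "1 \<le> u" "0 \<le> K" "6 \<le> K * sqrt B"
    and h: "h \<le> B / u\<^sup>2" "h' \<le> h" "h' \<le> h - K * h * sqrt h"
  shows "h' \<le> B / (u + 1)\<^sup>2"
proof (cases "h \<le> B / (u + 1)\<^sup>2")
  case True
  then show ?thesis
    using h by linarith
next
  case False
  define W where "W = K * sqrt B"
  have "0 < B / (u + 1)\<^sup>2"
    using assms by simp
  then have "0 \<le> h"
    using False by linarith
  have "sqrt (B / (u + 1)\<^sup>2) = sqrt B / (u + 1)"
    using \<open>1 \<le> u\<close> by (simp add: real_sqrt_divide)
  then have "sqrt B / (u + 1) \<le> sqrt h"
    using False real_sqrt_le_mono[of "B / (u + 1)\<^sup>2" h] by simp
  have "K * (B / (u + 1)\<^sup>2) \<le> K * h"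
    using False \<open>0 \<le> K\<close> by (intro mult_left_mono) auto
  from this \<open>sqrt B / (u + 1) \<le> sqrt h\<close>
  have "K * (B / (u + 1)\<^sup>2) * (sqrt B / (u + 1)) \<le> K * h * sqrt h"
    by (rule mult_mono) (use \<open>0 \<le> K\<close> \<open>0 \<le> h\<close> \<open>0 < B\<close> \<open>1 \<le> u\<close> in simp_all)
  moreover have "K * (B / (u + 1)\<^sup>2) * (sqrt B / (u + 1)) = W * B / (u + 1) ^ 3"
    by (simp add: W_def power2_eq_square power3_eq_cube)
  ultimately have "h' \<le> B / u\<^sup>2 - W * B / (u + 1) ^ 3"
    using h by linarith
  also have "\<dots> \<le> B / (u + 1)\<^sup>2"
  proof -
    have "(u + 1) ^ 3 \<le> u\<^sup>2 * (u + 1 + W)"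
    proof -
      have "1 * u \<le> u * u"
        using \<open>1 \<le> u\<close> by (intro mult_right_mono) auto
      then have "1 + 3 * u \<le> 4 * u\<^sup>2"
        using \<open>1 \<le> u\<close> unfolding power2_eq_square by linarith
      then have "(u + 1) ^ 3 \<le> u\<^sup>2 * (u + 1 + 6)"
        by (simp add: power2_eq_square power3_eq_cube algebra_simps)
      also have "\<dots> \<le> u\<^sup>2 * (u + 1 + W)"
        using assms by (intro mult_left_mono) (auto simp: W_def)
      finally show ?thesis .
    qed
    moreover have "1 / u\<^sup>2 - W / (u + 1) ^ 3 - 1 / (u + 1)\<^sup>2
        = ((u + 1) ^ 3 - u\<^sup>2 * (u + 1 + W)) / (u\<^sup>2 * (u + 1) ^ 3)"
      using \<open>1 \<le> u\<close> by (simp add: divide_simps) (simp add: algebra_simps power2_eq_square power3_eq_cube)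
    ultimately have "1 / u\<^sup>2 - W / (u + 1) ^ 3 \<le> 1 / (u + 1)\<^sup>2"
      using \<open>1 \<le> u\<close> divide_nonpos_pos[of "(u + 1) ^ 3 - u\<^sup>2 * (u + 1 + W)" "u\<^sup>2 * (u + 1) ^ 3"]
      by simp
    from mult_left_mono[OF this, of B] show ?thesis
      using \<open>0 < B\<close> by (simp add: algebra_simps)
  qed
  finally show ?thesis .
qed

lemma strongly_convex_rate_constant:
  fixes \<alpha> \<mu> L s :: real
  assumes "0 < \<alpha>" "0 < \<mu>" "0 < L" "0 \<le> s" "s < 1"
  shows "((1 - s\<^sup>2) * \<alpha> * sqrt (2 * \<mu>) / (4 * L) * (1 / (1 - s)))\<^sup>2
           * (18 * (1 / (1 + s))\<^sup>2 * (1 / (\<alpha> * sqrt \<mu> / (8 * sqrt 2 * L))\<^sup>2)) = 288"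
proof -
  have "1 - s\<^sup>2 = (1 + s) * (1 - s)"
    by (simp add: algebra_simps power2_eq_square)
  then have "((1 - s\<^sup>2) * \<alpha> * sqrt (2 * \<mu>) / (4 * L) * (1 / (1 - s)))\<^sup>2
      = (1 + s)\<^sup>2 * \<alpha>\<^sup>2 * (2 * \<mu>) / (16 * L\<^sup>2)"
    using assms by (simp add: power_mult_distrib power_divide)
  moreover have "1 / (\<alpha> * sqrt \<mu> / (8 * sqrt 2 * L))\<^sup>2 = 128 * L\<^sup>2 / (\<alpha>\<^sup>2 * \<mu>)"
    using assms by (simp add: power_mult_distrib power_divide)
  moreover have "(1 + s)\<^sup>2 * \<alpha>\<^sup>2 * (2 * \<mu>) / (16 * L\<^sup>2)
      * (18 * (1 / (1 + s))\<^sup>2 * (128 * L\<^sup>2 / (\<alpha>\<^sup>2 * \<mu>))) = 288"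
    using assms by (simp add: field_simps)
  ultimately show ?thesis
    by simp
qed

lemma antitone_bound_by_good_steps:
  fixes H B :: "nat \<Rightarrow> real" and good :: "nat \<Rightarrow> bool"
  assumes "H 0 \<le> B 0" and "\<And>k. H (Suc k) \<le> H k"
    and "\<And>k n. good k \<Longrightarrow> H k \<le> B n \<Longrightarrow> H (Suc k) \<le> B (Suc n)"
  shows "H k \<le> B (card {j. j < k \<and> good j})"
proof (induction k)
  case 0
  then show ?case
    using assms(1) by simp
next
  case (Suc k)
  show ?case
  proof (cases "good k")
    case True
    then have "{j. j < Suc k \<and> good j} = insert k {j. j < k \<and> good j}"
      by auto
    then show ?thesis
      using assms(3)[OF True Suc] by simp
  next
    case False
    then have "{j. j < Suc k \<and> good j} = {j. j < k \<and> good j}"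
      using less_Suc_eq by auto
    then show ?thesis
      using assms(2)[of k] Suc by simp
  qed
qed

locale ac_frank_wolfe =
  fixes A :: "'a::euclidean_space set"
    and f :: "'a \<Rightarrow> real" and grad :: "'a \<Rightarrow> 'a"
    and L \<alpha> :: real
    and r :: "nat \<Rightarrow> real"
    and xm1 :: 'a and x v :: "nat \<Rightarrow> 'a" and Lt :: "nat \<Rightarrow> real"
    and xstar :: 'a
  assumes bounded_A: "bounded A"
    and alpha_pos: "\<alpha> > 0"
    and sc_set: "strongly_convex_set \<alpha> (convex hull A)"
    and f_convex: "convex_on UNIV f"
    and f_grad: "\<And>y. (f has_derivative (\<lambda>h. grad y \<bullet> h)) (at y)"
    and lipschitz: "\<And>y z. norm (grad y - grad z) \<le> L * norm (y - z)"
    and xstar_in: "xstar \<in> convex hull A"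
    and xstar_opt: "\<And>y. y \<in> convex hull A \<Longrightarrow> f xstar \<le> f y"
    and r_range: "\<And>t. 0 < r t \<and> r t \<le> 1"
    and xm1_in: "xm1 \<in> A"
    and x0_in: "x 0 \<in> A"
    and x0_min: "\<And>u. u \<in> A \<Longrightarrow> grad xm1 \<bullet> x 0 \<le> grad xm1 \<bullet> u"
    and L0: "Lt 0 = ell f grad xm1 (x 0)"
    and L0_pos: "Lt 0 > 0"
    and v_in: "\<And>t. v t \<in> A"
    and v_min: "\<And>t u. u \<in> A \<Longrightarrow> grad (x t) \<bullet> v t \<le> grad (x t) \<bullet> u"
    and step: "\<And>t. let d = x t - v t;
                      \<gamma> = min ((grad (x t) \<bullet> d) / (Lt t * (norm d)\<^sup>2)) 1;
                      xb = x t - \<gamma> *\<^sub>R d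
                  in Lt (Suc t) = max (ell f grad (x t) xb) (r t * Lt t)
                   \<and> x (Suc t) = (if f xb < f (x t) then xb else x t)"
begin

definition step_size :: "nat \<Rightarrow> real" where
  "step_size t = min ((grad (x t) \<bullet> (x t - v t)) / (Lt t * (norm (x t - v t))\<^sup>2)) 1"

text \<open>\<open>x_bar t\<close> is the trial point that the paper calls \<open>x\<^sub>t\<^sub>+\<^sub>1\<close> with a bar.\<close>

definition x_bar :: "nat \<Rightarrow> 'a" where
  "x_bar t = x t - step_size t *\<^sub>R (x t - v t)"

definition gap :: "nat \<Rightarrow> real" where
  "gap t = f (x t) - f xstar"

lemma Lt_Suc: "Lt (Suc t) = max (ell f grad (x t) (x_bar t)) (r t * Lt t)"
  and x_Suc: "x (Suc t) = (if f (x_bar t) < f (x t) then x_bar t else x t)"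
  using step[of t] by (simp_all add: Let_def x_bar_def step_size_def)

lemma Lt_pos: "0 < Lt t"
proof (induction t)
  case 0
  then show ?case
    by (rule L0_pos)
next
  case (Suc t)
  then have "0 < r t * Lt t"
    using r_range[of t] by simp
  then show ?case
    unfolding Lt_Suc by linarith
qed

lemma Lt_le_L: "Lt t \<le> L"
proof (induction t)
  case 0
  then show ?case
    unfolding L0 by (rule ell_le_lipschitz[OF f_convex f_grad lipschitz])
next
  case (Suc t)
  have "r t * Lt t \<le> Lt t"
    using r_range[of t] Lt_pos[of t] by (simp add: mult_le_cancel_right1)
  then show ?case
    unfolding Lt_Suc using ell_le_lipschitz[OF f_convex f_grad lipschitz] Suc by simp
qed

lemma L_pos: "0 < L"
  using Lt_le_L[of 0] L0_pos by simp

lemma v_min_hull: "u \<in> convex hull A \<Longrightarrow> grad (x t) \<bullet> v t \<le> grad (x t) \<bullet> u"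
  by (rule inner_le_on_convex_hull[OF v_min])

lemma x_in_hull: "x t \<in> convex hull A"
proof (induction t)
  case 0
  then show ?case
    by (rule hull_inc[OF x0_in])
next
  case (Suc t)
  have "0 \<le> grad (x t) \<bullet> (x t - v t)"
    using v_min_hull[OF Suc] by (simp add: inner_diff_right)
  then have "0 \<le> step_size t" "step_size t \<le> 1"
    using Lt_pos[of t] by (auto simp: step_size_def)
  moreover have "x_bar t = (1 - step_size t) *\<^sub>R x t + step_size t *\<^sub>R v t"
    by (simp add: x_bar_def algebra_simps)
  ultimately have "x_bar t \<in> convex hull A"
    using Suc hull_inc[OF v_in] by (auto intro: convexD simp: convex_convex_hull)
  then show ?case
    using Suc by (simp add: x_Suc)
qed

lemma gap_nonneg: "0 \<le> gap t"
  using xstar_opt[OF x_in_hull] by (simp add: gap_def)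

lemma gap_Suc_le: "gap (Suc t) \<le> gap t"
  by (simp add: gap_def x_Suc)

lemma gap_Suc_le_x_bar: "gap (Suc t) \<le> f (x_bar t) - f xstar"
  by (simp add: gap_def x_Suc)

lemma gap_le_frank_wolfe_gap: "gap t \<le> grad (x t) \<bullet> (x t - v t)"
proof -
  have "f (x t) + grad (x t) \<bullet> (xstar - x t) \<le> f xstar"
    by (rule convex_on_gradient_tangent_le[OF f_convex f_grad])
  moreover have "grad (x t) \<bullet> v t \<le> grad (x t) \<bullet> xstar"
    by (rule v_min_hull[OF xstar_in])
  ultimately show ?thesis
    by (simp add: gap_def inner_diff_right)
qed

lemma gap_0_le: "gap 0 \<le> L * (diameter A)\<^sup>2 / 2"
proof -
  have "norm (x 0 - xm1) \<le> diameter A"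
    by (rule norm_diff_le_diameter_convex_hull[OF bounded_A xm1_in hull_inc[OF x0_in]])
  then have "L / 2 * (norm (x 0 - xm1))\<^sup>2 \<le> L / 2 * (diameter A)\<^sup>2"
    using L_pos by (intro mult_left_mono power_mono) auto
  moreover have "f (x 0) - f xm1 - grad xm1 \<bullet> (x 0 - xm1) \<le> L / 2 * (norm (x 0 - xm1))\<^sup>2"
    by (rule lipschitz_gradient_quadratic_upper_bound[OF f_grad lipschitz])
  moreover have "grad xm1 \<bullet> x 0 \<le> grad xm1 \<bullet> xstar"
    by (rule inner_le_on_convex_hull[OF x0_min xstar_in])
  moreover have "f xm1 + grad xm1 \<bullet> (xstar - xm1) \<le> f xstar"
    by (rule convex_on_gradient_tangent_le[OF f_convex f_grad])
  ultimately show ?thesis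
    by (simp add: gap_def inner_diff_right)
qed

lemma gap_drop:
  assumes good: "Lt (Suc t) \<le> \<eta> * Lt t" and \<eta>: "0 \<le> \<eta>" "\<eta> \<le> 2"
  shows "gap (Suc t) \<le> \<eta> / 2 * gap t
       \<or> gap (Suc t) \<le> gap t - (1 - \<eta> / 2) * (\<alpha> * norm (grad (x t)) / (4 * L) * gap t)"
proof -
  define g where "g = grad (x t)"
  define d where "d = x t - v t"
  define \<gamma> where "\<gamma> = step_size t"
  have "f (x_bar t) - f (x t) - g \<bullet> (x_bar t - x t)
      \<le> ell f grad (x t) (x_bar t) / 2 * (norm (x_bar t - x t))\<^sup>2"
    unfolding g_def by (rule taylor_remainder_le_ell)
  also have "\<dots> \<le> \<eta> * Lt t / 2 * (norm (x_bar t - x t))\<^sup>2"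
    using good by (intro mult_right_mono divide_right_mono) (auto simp: Lt_Suc)
  finally have "f (x_bar t) - f (x t) - g \<bullet> (x_bar t - x t)
      \<le> \<eta> * Lt t / 2 * (norm (x_bar t - x t))\<^sup>2" .
  moreover have "x_bar t - x t = - \<gamma> *\<^sub>R d"
    by (simp add: x_bar_def \<gamma>_def d_def)
  ultimately have "f (x_bar t) \<le> f (x t) - (\<gamma> * (g \<bullet> d) - \<eta> * Lt t / 2 * \<gamma>\<^sup>2 * (norm d)\<^sup>2)"
    by (simp add: power_mult_distrib)
  moreover have "(1 - \<eta> / 2) * gap t \<le> \<gamma> * (g \<bullet> d) - \<eta> * Lt t / 2 * \<gamma>\<^sup>2 * (norm d)\<^sup>2
      \<or> (1 - \<eta> / 2) * (\<alpha> * norm g / (4 * L) * gap t)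
          \<le> \<gamma> * (g \<bullet> d) - \<eta> * Lt t / 2 * \<gamma>\<^sup>2 * (norm d)\<^sup>2"
  proof (rule frank_wolfe_step_decrease)
    show "\<alpha> / 4 * (norm d)\<^sup>2 * norm g \<le> g \<bullet> d"
      unfolding g_def d_def
      by (rule strongly_convex_set_inner_gap[OF sc_set x_in_hull hull_inc[OF v_in] v_min_hull])
  qed (use gap_nonneg gap_le_frank_wolfe_gap Lt_pos Lt_le_L alpha_pos \<eta> in
        \<open>auto simp: g_def d_def \<gamma>_def step_size_def\<close>)
  ultimately show ?thesis
    using gap_Suc_le_x_bar[of t] unfolding g_def gap_def by (auto simp: algebra_simps)
qed

lemma gap_drop_strongly_convex:
  assumes good: "Lt (Suc t) \<le> \<eta> * Lt t" and \<eta>: "0 \<le> \<eta>" "\<eta> \<le> 2"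
    and "0 < \<mu>" and sc: "strongly_convex_fun \<mu> f grad"
  shows "gap (Suc t) \<le> \<eta> / 2 * gap t
       \<or> gap (Suc t) \<le> gap t - (1 - \<eta> / 2) * \<alpha> * sqrt (2 * \<mu>) / (4 * L) * gap t * sqrt (gap t)"
proof -
  have "gap t \<le> (norm (grad (x t)))\<^sup>2 / (2 * \<mu>)"
    unfolding gap_def by (rule strongly_convex_fun_gap_le_norm_grad[OF sc \<open>0 < \<mu>\<close>])
  then have "sqrt (2 * \<mu> * gap t) \<le> norm (grad (x t))"
    using \<open>0 < \<mu>\<close> by (simp add: real_le_lsqrt field_simps)
  then have "(1 - \<eta> / 2) * \<alpha> / (4 * L) * (sqrt (2 * \<mu>) * sqrt (gap t)) * gap t
      \<le> (1 - \<eta> / 2) * \<alpha> / (4 * L) * norm (grad (x t)) * gap t"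
    using \<eta> alpha_pos L_pos gap_nonneg[of t]
    by (intro mult_right_mono mult_left_mono) (auto simp: real_sqrt_mult)
  then show ?thesis
    using gap_drop[OF good \<eta>] \<eta> by (auto simp: algebra_simps)
qed

lemma gap_rate_strongly_convex:
  assumes \<eta>: "0 \<le> \<eta>" "\<eta> < 2" and "0 < \<mu>" and sc: "strongly_convex_fun \<mu> f grad"
  defines "c \<equiv> 1 / (1 - sqrt (\<eta> / 2))"
    and "M \<equiv> max (L * (diameter A)\<^sup>2 / 2)
                  (18 * (1 / (1 + sqrt (\<eta> / 2)))\<^sup>2 * (1 / (\<alpha> * sqrt \<mu> / (8 * sqrt 2 * L))\<^sup>2))"
  shows "gap k \<le> M * c\<^sup>2 / (real (card {j. j < k \<and> Lt (Suc j) \<le> \<eta> * Lt j}) + c)\<^sup>2"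
proof -
  define s where "s = sqrt (\<eta> / 2)"
  define K where "K = (1 - \<eta> / 2) * \<alpha> * sqrt (2 * \<mu>) / (4 * L)"
  define M\<^sub>2 where "M\<^sub>2 = 18 * (1 / (1 + s))\<^sup>2 * (1 / (\<alpha> * sqrt \<mu> / (8 * sqrt 2 * L))\<^sup>2)"
  have s: "0 \<le> s" "s < 1" "s\<^sup>2 = \<eta> / 2"
    using \<eta> by (auto simp: s_def real_sqrt_less_iff)
  have c: "c = 1 / (1 - s)"
    by (simp add: c_def s_def)
  have "1 \<le> c"
    using s unfolding c by (simp add: le_divide_eq)
  have sc_eq: "s * c = c - 1"
    using s unfolding c by (simp add: field_simps)
  have "0 \<le> K"
    using \<eta> alpha_pos L_pos \<open>0 < \<mu>\<close> by (simp add: K_def)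
  \<comment> \<open>Any value \<open>\<ge> 36\<close> would do here; the constant of the theorem gives 288.\<close>
  have "(K * c)\<^sup>2 * M\<^sub>2 = 288"
    unfolding K_def c M\<^sub>2_def s(3)[symmetric]
    by (rule strongly_convex_rate_constant[OF alpha_pos \<open>0 < \<mu>\<close> L_pos s(1,2)])
  moreover have "M\<^sub>2 \<le> M"
    by (simp add: M_def M\<^sub>2_def s_def)
  ultimately have "288 \<le> K\<^sup>2 * (M * c\<^sup>2)"
    using mult_left_mono[OF \<open>M\<^sub>2 \<le> M\<close>, of "(K * c)\<^sup>2"] by (simp add: algebra_simps)
  then have "0 < M"
    using mult_nonpos_nonneg[of M "K\<^sup>2 * c\<^sup>2"] by (force simp: algebra_simps)
  have "6 \<le> K * sqrt (M * c\<^sup>2)"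
    using real_sqrt_le_mono[of 36 "K\<^sup>2 * (M * c\<^sup>2)"] \<open>288 \<le> K\<^sup>2 * (M * c\<^sup>2)\<close> \<open>0 \<le> K\<close>
    by (simp add: real_sqrt_mult)
  show ?thesis
  proof (rule antitone_bound_by_good_steps[where B = "\<lambda>n. M * c\<^sup>2 / (real n + c)\<^sup>2"])
    show "gap 0 \<le> M * c\<^sup>2 / (real 0 + c)\<^sup>2"
      using gap_0_le \<open>1 \<le> c\<close> by (simp add: M_def)
  next
    fix j n
    assume good: "Lt (Suc j) \<le> \<eta> * Lt j" and bound: "gap j \<le> M * c\<^sup>2 / (real n + c)\<^sup>2"
    have "s * real n \<le> real n"
      using s by (simp add: mult_left_le_one_le)
    then have "s * (real n + c + 1) \<le> real n + c"
      using s sc_eq by (simp add: algebra_simps)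
    moreover have "gap (Suc j) \<le> s\<^sup>2 * gap j \<or> gap (Suc j) \<le> gap j - K * gap j * sqrt (gap j)"
      using gap_drop_strongly_convex[OF good \<eta>(1) less_imp_le[OF \<eta>(2)] \<open>0 < \<mu>\<close> sc]
      by (simp add: K_def s(3))
    ultimately show "gap (Suc j) \<le> M * c\<^sup>2 / (real (Suc n) + c)\<^sup>2"
      using inverse_square_bound_step_contraction[of "M * c\<^sup>2" "real n + c" s "gap j" "gap (Suc j)"]
        inverse_square_bound_step_sqrt_decrease[of "M * c\<^sup>2" "real n + c" K "gap j" "gap (Suc j)"]
        bound gap_Suc_le[of j] \<open>0 < M\<close> \<open>1 \<le> c\<close> \<open>0 \<le> K\<close> \<open>6 \<le> K * sqrt (M * c\<^sup>2)\<close> s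
      by (auto simp: add.commute add.left_commute)
  qed (rule gap_Suc_le)
qed

lemma gap_rate_gradient_lower_bound:
  assumes \<eta>: "0 \<le> \<eta>" "\<eta> \<le> 2" and grad_ge: "\<forall>y\<in>convex hull A. norm (grad y) \<ge> g"
  defines "q \<equiv> max (\<eta> / 2) (1 - (1 - \<eta> / 2) * \<alpha> * g / (8 * L))"
  shows "gap k \<le> L * (diameter A)\<^sup>2 / 2 * q ^ card {j. j < k \<and> Lt (Suc j) \<le> \<eta> * Lt j}"
proof (rule antitone_bound_by_good_steps[where B = "\<lambda>n. L * (diameter A)\<^sup>2 / 2 * q ^ n"])
  show "gap 0 \<le> L * (diameter A)\<^sup>2 / 2 * q ^ 0"
    using gap_0_le by simp
next
  fix j n
  assume good: "Lt (Suc j) \<le> \<eta> * Lt j" and bound: "gap j \<le> L * (diameter A)\<^sup>2 / 2 * q ^ n"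
  have "g \<le> norm (grad (x j))"
    using grad_ge x_in_hull[of j] by blast
  then have "g / 8 \<le> norm (grad (x j)) / 4"
    using norm_ge_zero[of "grad (x j)"] by linarith
  then have "(1 - \<eta> / 2) * \<alpha> / L * (g / 8) * gap j
      \<le> (1 - \<eta> / 2) * \<alpha> / L * (norm (grad (x j)) / 4) * gap j"
    using \<eta> alpha_pos L_pos gap_nonneg[of j] by (intro mult_right_mono mult_left_mono) auto
  then have drop: "(1 - \<eta> / 2) * \<alpha> * g / (8 * L) * gap j
      \<le> (1 - \<eta> / 2) * (\<alpha> * norm (grad (x j)) / (4 * L) * gap j)"
    by (simp add: field_simps)
  have "gap (Suc j) \<le> q * gap j"
    using gap_drop[OF good \<eta>]
  proof (elim disjE)
    assume "gap (Suc j) \<le> \<eta> / 2 * gap j"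
    then show ?thesis
      unfolding q_def by (rule order_trans[OF _ mult_right_mono[OF max.cobounded1 gap_nonneg]])
  next
    assume "gap (Suc j) \<le> gap j - (1 - \<eta> / 2) * (\<alpha> * norm (grad (x j)) / (4 * L) * gap j)"
    then have "gap (Suc j) \<le> (1 - (1 - \<eta> / 2) * \<alpha> * g / (8 * L)) * gap j"
      using drop by (simp add: algebra_simps)
    then show ?thesis
      unfolding q_def by (rule order_trans[OF _ mult_right_mono[OF max.cobounded2 gap_nonneg]])
  qed
  also have "\<dots> \<le> q * (L * (diameter A)\<^sup>2 / 2 * q ^ n)"
    using bound \<eta> by (intro mult_left_mono) (auto simp: q_def)
  finally show "gap (Suc j) \<le> L * (diameter A)\<^sup>2 / 2 * q ^ Suc n"
    by (simp add: algebra_simps)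
qed (rule gap_Suc_le)

end

theorem theorem3:
  fixes A :: "'a::euclidean_space set"
    and f :: "'a \<Rightarrow> real" and grad :: "'a \<Rightarrow> 'a"
    and L \<alpha> \<eta> :: real
    and r :: "nat \<Rightarrow> real"
    and xm1 :: 'a and x v :: "nat \<Rightarrow> 'a" and Lt :: "nat \<Rightarrow> real"
    and xstar :: 'a
  assumes compactA: "compact A"
    and alpha_pos: "\<alpha> > 0"
    and sc_set: "strongly_convex_set \<alpha> (convex hull A)"
    and f_convex: "convex_on UNIV f"
    and f_grad: "\<And>y. (f has_derivative (\<lambda>h. grad y \<bullet> h)) (at y)"
    and lipschitz: "\<And>y z. norm (grad y - grad z) \<le> L * norm (y - z)"
    and xstar_in: "xstar \<in> convex hull A"
    and xstar_opt: "\<And>y. y \<in> convex hull A \<Longrightarrow> f xstar \<le> f y"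
    \<comment> \<open>Condition (D)\<close>
    and r_range: "\<And>t. 0 < r t \<and> r t \<le> 1"
    and r_prod: "\<exists>p. 0 < p \<and> p \<le> 1 \<and> (\<lambda>T. \<Prod>t<T. r t) \<longlonglongrightarrow> p"
    \<comment> \<open>initialisation\<close>
    and xm1_in: "xm1 \<in> A"
    and x0_in: "x 0 \<in> A"
    and x0_min: "\<And>u. u \<in> A \<Longrightarrow> grad xm1 \<bullet> x 0 \<le> grad xm1 \<bullet> u"
    and L0: "Lt 0 = ell f grad xm1 (x 0)"
    and L0_pos: "Lt 0 > 0"
    \<comment> \<open>iteration\<close>
    and v_in: "\<And>t. v t \<in> A"
    and v_min: "\<And>t u. u \<in> A \<Longrightarrow> grad (x t) \<bullet> v t \<le> grad (x t) \<bullet> u"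
    and step: "\<And>t. let d = x t - v t;
                      \<gamma> = min ((grad (x t) \<bullet> d) / (Lt t * (norm d)\<^sup>2)) 1;
                      xb = x t - \<gamma> *\<^sub>R d
                  in Lt (Suc t) = max (ell f grad (x t) xb) (r t * Lt t)
                   \<and> x (Suc t) = (if f xb < f (x t) then xb else x t)"
    and eta: "1 < \<eta>" "\<eta> < 2"
  shows
    "(\<forall>\<mu>>0. strongly_convex_fun \<mu> f grad \<longrightarrow>
        (\<forall>k. Lt (Suc k) \<le> \<eta> * Lt k \<longrightarrow>
          (let t = card {j. j < k \<and> Lt (Suc j) \<le> \<eta> * Lt j};
               c = 1 / (1 - sqrt (\<eta> / 2))
           in f (x k) - f xstar \<le>
              max (L * (diameter A)\<^sup>2 / 2)
                  (18 * (1 / (1 + sqrt (\<eta> / 2)))\<^sup>2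
                      * (1 / ((\<alpha> * sqrt \<mu>) / (8 * sqrt 2 * L))\<^sup>2))
              * c\<^sup>2 / (real t + c)\<^sup>2)))
   \<and> (\<forall>g>0. (\<forall>y\<in>convex hull A. norm (grad y) \<ge> g) \<longrightarrow>
        (\<forall>k. Lt (Suc k) \<le> \<eta> * Lt k \<longrightarrow>
          (let t = card {j. j < k \<and> Lt (Suc j) \<le> \<eta> * Lt j}
           in f (x k) - f xstar \<le>
              L * (diameter A)\<^sup>2 / 2
              * (max (\<eta> / 2) (1 - (1 - \<eta> / 2) * \<alpha> * g / (8 * L))) ^ t)))"
proof -
  interpret ac_frank_wolfe A f grad L \<alpha> r xm1 x v Lt xstar
    by (unfold_locales; (fact | rule compact_imp_bounded[OF compactA]))
  show ?thesis
    unfolding Let_def gap_def[symmetric]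
    by (intro conjI allI impI; rule gap_rate_strongly_convex gap_rate_gradient_lower_bound)
      (use eta in auto)
qed

end
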